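(* Assume $(\boldsymbol\lambda,\boldsymbol\mu)$ satisfies (H) (notation as there). 1) If $(\boldsymbol\lambda,\boldsymbol\mu)$ satisfies (J1), then $\delta>0$, and $j^\prec_{\boldsymbol\lambda,\boldsymbol\mu}=(-1)^{\mathrm{ht}\rho+\mathrm{ht}\rho'}$ if $h\equiv\gamma\pmod{nl}$ or $h\equiv\delta\pmod{nl}$, and $j^\prec_{\boldsymbol\lambda,\boldsymbol\mu}=0$ otherwise. 2) If $(\boldsymbol\lambda,\boldsymbol\mu)$ satisfies (J2), then $\delta=0$ and $j^\prec_{\boldsymbol\lambda,\boldsymbol\mu}=(-1)^{\mathrm{ht}\rho+\mathrm{ht}\rho'}\varepsilon$, where $\varepsilon=1$ if $h\equiv\gamma\pmod{nl}$ and $h\not\equiv0\pmod{nl}$; $\varepsilon=-1$ if $h\not\equiv\gamma\pmod{nl}$ and $h\equiv0\pmod{nl}$; $\varepsilon=0$ otherwise.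
   Context: Fix $n,l,m\ge1$, $\mathbf s_l=(s_1,\dots,s_l)\in\mathbb Z^l$, $s=\sum s_b$. Partitions are identified with Young diagrams; $\Pi^l_m$ = $l$-tuples of partitions of total size $m$, nodes $(i,j,b)$ with content $s_b+j-i$ and $\mathrm{res}_n$ = content mod $n$. Ribbon: nonempty connected skew diagram with no $2\times2$ square; head/tail = node with $j-i$ minimal/maximal; $\mathrm{ht}$ = row of head minus row of tail; length = number of nodes. For $|\lambda|=r$, $\boldsymbol\beta(\lambda)=(\lambda_i+s+1-i)_{i\le r}$, $B(\lambda)$ its set. Each $k\in\mathbb Z$ is uniquely $k=c(k)+n(d(k)-1)+nl\,m(k)$, $c(k)\in\{1..n\}$, $d(k)\in\{1..l\}$; $\phi(k)=c(k)+n\,m(k)$. $\boldsymbol\lambda\leftrightarrow\lambda$ iff $\{(\lambda^{(b)}_i+s_b+1-i,b)\}=\{(\phi(k),d(k)):k\in\{\lambda_i+s+1-i\}\}$. $\boldsymbol\lambda\prec\boldsymbol\mu$ iff $\lambda\lhd\mu$ (strict dominance). (J1): $\boldsymbol\lambda\ne\boldsymbol\mu$, there are $d\ne d'$ with $\mu^{(d)}\subset\lambda^{(d)}$, $\lambda^{(d')}\subset\mu^{(d')}$, $\lambda^{(b)}=\mu^{(b)}$ otherwise, and $\rho:=\lambda^{(d)}/\mu^{(d)}$, $\rho':=\mu^{(d')}/\lambda^{(d')}$ ribbons of common length $\hat h$. (J2): $\boldsymbol\lambda\ne\boldsymbol\mu$, there is $d$ with $\lambda^{(b)}=\mu^{(b)}$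 for $b\ne d$, $\rho:=\lambda^{(d)}/(\lambda^{(d)}\cap\mu^{(d)})$, $\rho':=\mu^{(d)}/(\lambda^{(d)}\cap\mu^{(d)})$ ribbons of common length $\hat h$. $j_{\boldsymbol\lambda,\boldsymbol\mu}$: in case (J1), $(-1)^{\mathrm{ht}\rho+\mathrm{ht}\rho'}$ if $\mathrm{res}_n(\mathrm{hd}\rho)=\mathrm{res}_n(\mathrm{hd}\rho')$, else $0$; in case (J2), $(-1)^{\mathrm{ht}\rho+\mathrm{ht}\rho'}\varepsilon'$ with $\varepsilon'=1$ if head residues are equal and $\hat h\not\equiv0\pmod n$, $\varepsilon'=-1$ if they differ and $\hat h\equiv 0\pmod n$, $\varepsilon'=0$ otherwise; otherwise $0$ (this equals the paper's $\wp$-adic valuation $\nu_\wp(J_{\boldsymbol\lambda,\boldsymbol\mu})$). $j^\prec_{\boldsymbol\lambda,\boldsymbol\mu}=j_{\boldsymbol\lambda,\boldsymbol\mu}$ if $\boldsymbol\lambda\prec\boldsymbol\mu$, else $0$. (H): $\boldsymbol\lambda\leftrightarrow\lambda$, $\boldsymbol\mu\leftrightarrow\mu$, $\boldsymbol\lambda\prec\boldsymbol\mu$, $|\lambda|=|\mu|=r$, $\#(B(\lambda)\cap B(\mu))=r-2$. Under (H): $\boldsymbol\beta(\lambda)=(\alpha_i)$, $\boldsymbol\beta(\mu)=(\beta_i)$; $\lambda/(\lambda\cap\mu)$ and $\mu/(\lambda\cap\mu)$ are ribbons of a common length $h$; $x$ is the row of the head of $\lambda/(\lambda\cap\mu)$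 and $y$ the row of the tail of $\mu/(\lambda\cap\mu)$; $\gamma,\delta\in\{0,\dots,nl-1\}$ are the residues mod $nl$ of $c(\beta_y)-c(\beta_x)$ and $n(d(\beta_y)-d(\beta_x))$. *)

theory Defs
  imports Main
begin

text \<open>A partition is a function p :: nat => nat with rows indexed from 1
  (p 0 = 0 by convention), weakly decreasing, finitely supported.\<close>
definition is_partition :: "(nat \<Rightarrow> nat) \<Rightarrow> bool" where
  "is_partition p \<longleftrightarrow> p 0 = 0 \<and> (\<forall>i\<ge>1. p (Suc i) \<le> p i) \<and> finite {i. p i \<noteq> 0}"

definition young :: "(nat \<Rightarrow> nat) \<Rightarrow> (nat \<times> nat) set" where
  "young p = {(i, j). 1 \<le> i \<and> 1 \<le> j \<and> j \<le> p i}"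

definition psize :: "(nat \<Rightarrow> nat) \<Rightarrow> nat" where
  "psize p = card (young p)"

definition multipartition :: "nat \<Rightarrow> nat \<Rightarrow> (nat \<Rightarrow> nat \<Rightarrow> nat) \<Rightarrow> bool" where
  "multipartition l m L \<longleftrightarrow> (\<forall>b\<in>{1..l}. is_partition (L b)) \<and>
     (\<forall>b. b \<notin> {1..l} \<longrightarrow> L b = (\<lambda>_. 0)) \<and> (\<Sum>b=1..l. psize (L b)) = m"

definition dominates_strict :: "(nat \<Rightarrow> nat) \<Rightarrow> (nat \<Rightarrow> nat) \<Rightarrow> bool" where
  "dominates_strict p q \<longleftrightarrow> psize p = psize q \<and>
     (\<forall>k. (\<Sum>i=1..k. p i) \<le> (\<Sum>i=1..k. q i)) \<and> p \<noteq> q"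

definition adjacent :: "nat \<times> nat \<Rightarrow> nat \<times> nat \<Rightarrow> bool" where
  "adjacent u v \<longleftrightarrow>
     \<bar>int (fst u) - int (fst v)\<bar> + \<bar>int (snd u) - int (snd v)\<bar> = 1"

definition node_connected :: "(nat \<times> nat) set \<Rightarrow> bool" where
  "node_connected S \<longleftrightarrow>
     (\<forall>u\<in>S. \<forall>v\<in>S. (\<lambda>a b. a \<in> S \<and> b \<in> S \<and> adjacent a b)\<^sup>*\<^sup>* u v)"

definition no_square :: "(nat \<times> nat) set \<Rightarrow> bool" where
  "no_square S \<longleftrightarrow> \<not> (\<exists>i j. (i, j) \<in> S \<and> (Suc i, j) \<in> S \<and> (i, Suc j) \<in> S \<and> (Suc i, Suc j) \<in> S)"

text \<open>A ribbon: nonempty (finite) connected skew diagram with no 2x2 square.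
  (It is only ever applied to skew diagrams of the form young p - young q.)\<close>
definition ribbon :: "(nat \<times> nat) set \<Rightarrow> bool" where
  "ribbon S \<longleftrightarrow> S \<noteq> {} \<and> finite S \<and> node_connected S \<and> no_square S"

definition cont0 :: "nat \<times> nat \<Rightarrow> int" where
  "cont0 u = int (snd u) - int (fst u)"

definition rhead :: "(nat \<times> nat) set \<Rightarrow> nat \<times> nat" where
  "rhead S = (SOME u. u \<in> S \<and> (\<forall>v\<in>S. cont0 u \<le> cont0 v))"

definition rtail :: "(nat \<times> nat) set \<Rightarrow> nat \<times> nat" where
  "rtail S = (SOME u. u \<in> S \<and> (\<forall>v\<in>S. cont0 v \<le> cont0 u))"

definition rht :: "(nat \<times> nat) set \<Rightarrow> nat" where
  "rht S = fst (rhead S) - fst (rtail S)"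

definition resn :: "nat \<Rightarrow> (nat \<Rightarrow> int) \<Rightarrow> nat \<Rightarrow> nat \<times> nat \<Rightarrow> int" where
  "resn n s b u = (s b + int (snd u) - int (fst u)) mod int n"

definition charge :: "nat \<Rightarrow> (nat \<Rightarrow> int) \<Rightarrow> int" where
  "charge l s = (\<Sum>b=1..l. s b)"

definition beta :: "int \<Rightarrow> (nat \<Rightarrow> nat) \<Rightarrow> nat \<Rightarrow> int" where
  "beta c p i = int (p i) + c + 1 - int i"

definition Bset :: "int \<Rightarrow> nat \<Rightarrow> (nat \<Rightarrow> nat) \<Rightarrow> int set" where
  "Bset c r p = {beta c p i | i. 1 \<le> i \<and> i \<le> r}"

text \<open>The unique decomposition k = c(k) + n(d(k)-1) + n l m(k), with
  c(k) in {1..n}, d(k) in {1..l}, written out explicitly.\<close>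
definition cc :: "nat \<Rightarrow> nat \<Rightarrow> int \<Rightarrow> int" where
  "cc n l k = ((k - 1) mod int (n * l)) mod int n + 1"

definition dd :: "nat \<Rightarrow> nat \<Rightarrow> int \<Rightarrow> nat" where
  "dd n l k = nat (((k - 1) mod int (n * l)) div int n) + 1"

definition mm :: "nat \<Rightarrow> nat \<Rightarrow> int \<Rightarrow> int" where
  "mm n l k = (k - 1) div int (n * l)"

definition phi :: "nat \<Rightarrow> nat \<Rightarrow> int \<Rightarrow> int" where
  "phi n l k = cc n l k + int n * mm n l k"

text \<open>bold-lambda <-> lambda (all rows i >= 1, i.e. infinite charged beta-sets).\<close>
definition corresp :: "nat \<Rightarrow> nat \<Rightarrow> (nat \<Rightarrow> int) \<Rightarrow> (nat \<Rightarrow> nat \<Rightarrow> nat) \<Rightarrow> (nat \<Rightarrow> nat) \<Rightarrow> bool" where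
  "corresp n l s L p \<longleftrightarrow>
     {(beta (s b) (L b) i, b) | b i. b \<in> {1..l} \<and> 1 \<le> i} =
     (\<lambda>k. (phi n l k, dd n l k)) ` {beta (charge l s) p i | i. 1 \<le> i}"

definition prec :: "nat \<Rightarrow> nat \<Rightarrow> (nat \<Rightarrow> int) \<Rightarrow> (nat \<Rightarrow> nat \<Rightarrow> nat) \<Rightarrow> (nat \<Rightarrow> nat \<Rightarrow> nat) \<Rightarrow> bool" where
  "prec n l s L M \<longleftrightarrow> (\<exists>p q. is_partition p \<and> is_partition q \<and> corresp n l s L p \<and> corresp n l s M q \<and> dominates_strict p q)"

definition J1 :: "nat \<Rightarrow> (nat \<Rightarrow> nat \<Rightarrow> nat) \<Rightarrow> (nat \<Rightarrow> nat \<Rightarrow> nat) \<Rightarrow> nat \<Rightarrow> nat \<Rightarrow> bool" where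
  "J1 l L M d d' \<longleftrightarrow> L \<noteq> M \<and> d \<in> {1..l} \<and> d' \<in> {1..l} \<and> d \<noteq> d' \<and>
     young (M d) \<subseteq> young (L d) \<and> young (L d') \<subseteq> young (M d') \<and>
     (\<forall>b\<in>{1..l}. b \<noteq> d \<and> b \<noteq> d' \<longrightarrow> L b = M b) \<and>
     ribbon (young (L d) - young (M d)) \<and> ribbon (young (M d') - young (L d')) \<and>
     card (young (L d) - young (M d)) = card (young (M d') - young (L d'))"

definition J2 :: "nat \<Rightarrow> (nat \<Rightarrow> nat \<Rightarrow> nat) \<Rightarrow> (nat \<Rightarrow> nat \<Rightarrow> nat) \<Rightarrow> nat \<Rightarrow> bool" where
  "J2 l L M d \<longleftrightarrow> L \<noteq> M \<and> d \<in> {1..l} \<and>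
     (\<forall>b\<in>{1..l}. b \<noteq> d \<longrightarrow> L b = M b) \<and>
     ribbon (young (L d) - young (M d)) \<and> ribbon (young (M d) - young (L d)) \<and>
     card (young (L d) - young (M d)) = card (young (M d) - young (L d))"

definition j1val :: "nat \<Rightarrow> (nat \<Rightarrow> int) \<Rightarrow> (nat \<Rightarrow> nat \<Rightarrow> nat) \<Rightarrow> (nat \<Rightarrow> nat \<Rightarrow> nat) \<Rightarrow> nat \<Rightarrow> nat \<Rightarrow> int" where
  "j1val n s L M d d' =
    (let \<rho> = young (L d) - young (M d); \<rho>' = young (M d') - young (L d') in
     if resn n s d (rhead \<rho>) = resn n s d' (rhead \<rho>') then (-1) ^ (rht \<rho> + rht \<rho>') else 0)"

definition j2val :: "nat \<Rightarrow> (nat \<Rightarrow> int) \<Rightarrow> (nat \<Rightarrow> nat \<Rightarrow> nat) \<Rightarrow> (nat \<Rightarrow> nat \<Rightarrow> nat) \<Rightarrow> nat \<Rightarrow> int" where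
  "j2val n s L M d =
    (let \<rho> = young (L d) - young (M d); \<rho>' = young (M d) - young (L d);
         hh = card \<rho>;
         same = (resn n s d (rhead \<rho>) = resn n s d (rhead \<rho>'));
         eps = (if same \<and> \<not> n dvd hh then 1 else if \<not> same \<and> n dvd hh then -1 else (0::int)) in
     (-1) ^ (rht \<rho> + rht \<rho>') * eps)"

text \<open>j_{lambda,mu}; in case (J1)/(J2) the witnesses d, d' are unique, so the
  choice operator merely picks them.\<close>
definition jcoef :: "nat \<Rightarrow> nat \<Rightarrow> (nat \<Rightarrow> int) \<Rightarrow> (nat \<Rightarrow> nat \<Rightarrow> nat) \<Rightarrow> (nat \<Rightarrow> nat \<Rightarrow> nat) \<Rightarrow> int" where
  "jcoef n l s L M =
    (if \<exists>d d'. J1 l L M d d' then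
       (let dp = (SOME dp. J1 l L M (fst dp) (snd dp)) in j1val n s L M (fst dp) (snd dp))
     else if \<exists>d. J2 l L M d then j2val n s L M (SOME d. J2 l L M d)
     else 0)"

definition jprec :: "nat \<Rightarrow> nat \<Rightarrow> (nat \<Rightarrow> int) \<Rightarrow> (nat \<Rightarrow> nat \<Rightarrow> nat) \<Rightarrow> (nat \<Rightarrow> nat \<Rightarrow> nat) \<Rightarrow> int" where
  "jprec n l s L M = (if prec n l s L M then jcoef n l s L M else 0)"

definition condH :: "nat \<Rightarrow> nat \<Rightarrow> (nat \<Rightarrow> int) \<Rightarrow> (nat \<Rightarrow> nat \<Rightarrow> nat) \<Rightarrow> (nat \<Rightarrow> nat \<Rightarrow> nat)
     \<Rightarrow> (nat \<Rightarrow> nat) \<Rightarrow> (nat \<Rightarrow> nat) \<Rightarrow> nat \<Rightarrow> bool" where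
  "condH n l s L M p q r \<longleftrightarrow> is_partition p \<and> is_partition q \<and> corresp n l s L p \<and> corresp n l s M q \<and> prec n l s L M \<and>
     psize p = r \<and> psize q = r \<and>
     int (card (Bset (charge l s) r p \<inter> Bset (charge l s) r q)) = int r - 2"

end

theory Submission
  imports Defs
begin

text \<open>
  Write B p and B q for the charged beta-sets of \<lambda> = p and \<mu> = q. Hypothesis (H) says that they
  differ in exactly two beads, B p - B q = {a1 < a2} and B q - B p = {b1 < b2}, and dominance
  forces b1 < a1 < a2 < b2. So p - q and q - p are the ribbons swept out by the bead moves
  b1 \<rightarrow> a1 and a2 \<rightarrow> b2; they have length h = a1 - b1 = b2 - a2, and beta q x = b1,
  beta q y = b2.

  The correspondence puts bead k on runner d(k) at position \<phi>(k), increasingly along each runner.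
  A runner carries as many of a1, a2 as of b1, b2, and carries one of them exactly when the
  corresponding components of \<lambda> and \<mu> differ. So under (J1) each of d, d' carries one a and one
  b, and under (J2) all four beads lie on runner d. In both cases the heads of \<rho> and \<rho>' have
  contents read off from the \<phi>-positions of these beads, and since \<phi>(k) \<equiv> c(k) mod n, the
  residue conditions defining j become equalities between the digits c(.) and d(.) of a1, a2, b1,
  b2. As k \<equiv> c(k) + n (d(k) - 1) mod n l, these are exactly the congruences h \<equiv> \<gamma>, h \<equiv> \<delta> and
  h \<equiv> 0 mod n l.
\<close>

section \<open>Partitions and beta-sets\<close>

lemma partition_antimono:
  assumes "is_partition P" "1 \<le> i" "i \<le> j"
  shows "P j \<le> P i"
  using assms(3)
proof (induction j rule: dec_induct)
  case (step k)
  then show ?case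
    using assms(1,2) unfolding is_partition_def by (metis le_trans)
qed simp

lemma partition_eventually_zero:
  assumes "is_partition P"
  obtains R where "\<And>i. R < i \<Longrightarrow> P i = 0"
proof -
  have "finite {i. P i \<noteq> 0}" using assms unfolding is_partition_def by auto
  then obtain R where "\<forall>i\<in>{i. P i \<noteq> 0}. i \<le> R" using finite_nat_set_iff_bounded_le by blast
  then show ?thesis using that by (meson mem_Collect_eq not_le)
qed

lemma finite_young:
  assumes "is_partition P"
  shows "finite (young P)"
proof -
  obtain R where R: "\<And>i. R < i \<Longrightarrow> P i = 0" using partition_eventually_zero[OF assms] by blast
  have "young P \<subseteq> {..R} \<times> {..P 1}"
  proof
    fix u assume "u \<in> young P"
    then obtain i j where u: "u = (i, j)" "1 \<le> i" "1 \<le> j" "j \<le> P i" unfolding young_def by auto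
    have "i \<le> R" using R[of i] u(3,4) by (cases "R < i") auto
    moreover have "j \<le> P 1" using partition_antimono[OF assms, of 1 i] u(2,4) by simp
    ultimately show "u \<in> {..R} \<times> {..P 1}" using u(1) by simp
  qed
  then show ?thesis using finite_subset by blast
qed

lemma partition_eqI_young:
  assumes "is_partition P" "is_partition Q" "young P = young Q"
  shows "P = Q"
proof
  fix i
  show "P i = Q i"
  proof (cases "i = 0")
    case True then show ?thesis using assms unfolding is_partition_def by simp
  next
    case False
    have "P i \<le> Q i" if "young P \<subseteq> young Q" for P Q :: "nat \<Rightarrow> nat"
    proof (cases "P i = 0")
      case False
      then have "(i, P i) \<in> young P" using \<open>i \<noteq> 0\<close> unfolding young_def by auto
      then have "(i, P i) \<in> young Q" using that by blast
      then show ?thesis unfolding young_def by simp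
    qed simp
    then show ?thesis using assms(3) by (simp add: order_antisym)
  qed
qed

lemma partition_zero_beyond_size:
  assumes "is_partition P" "psize P < i"
  shows "P i = 0"
proof (rule ccontr)
  assume "P i \<noteq> 0"
  then have "(\<lambda>k. (k, 1::nat)) ` {1..i} \<subseteq> young P"
    using partition_antimono[OF assms(1)] unfolding young_def by fastforce
  from card_mono[OF finite_young[OF assms(1)] this] have "i \<le> psize P"
    unfolding psize_def by (simp add: card_image inj_on_def)
  then show False using assms(2) by simp
qed

definition beta_set :: "int \<Rightarrow> (nat \<Rightarrow> nat) \<Rightarrow> int set" where
  "beta_set c P = {beta c P i | i. 1 \<le> i}"

definition count_ge :: "int set \<Rightarrow> int \<Rightarrow> nat" where
  "count_ge X v = card {x \<in> X. v \<le> x}"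

lemma beta_strict_decreasing:
  assumes "is_partition P" "1 \<le> i" "i < j"
  shows "beta c P j < beta c P i"
  using partition_antimono[OF assms(1,2), of j] assms(3) unfolding beta_def by auto

lemma inj_on_beta:
  assumes "is_partition P"
  shows "inj_on (beta c P) {i. 1 \<le> i}"
proof (rule inj_onI)
  fix i j assume "i \<in> {i. 1 \<le> i}" "j \<in> {i. 1 \<le> i}" "beta c P i = beta c P j"
  then show "i = j"
    using beta_strict_decreasing[OF assms, of i j c] beta_strict_decreasing[OF assms, of j i c]
    by (cases i j rule: linorder_cases) auto
qed

lemma finite_rows_beta_ge:
  assumes "is_partition P"
  shows "finite {i. 1 \<le> i \<and> v \<le> beta c P i}"
proof -
  obtain R where R: "\<And>i. R < i \<Longrightarrow> P i = 0" using partition_eventually_zero[OF assms] by blast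
  have "{i. 1 \<le> i \<and> v \<le> beta c P i} \<subseteq> {..max R (nat (c + 1 - v))}"
  proof
    fix i assume i: "i \<in> {i. 1 \<le> i \<and> v \<le> beta c P i}"
    show "i \<in> {..max R (nat (c + 1 - v))}"
    proof (cases "R < i")
      case True
      then show ?thesis using i R[of i] unfolding beta_def by auto
    qed auto
  qed
  then show ?thesis using finite_subset by blast
qed

lemma beta_set_ge_eq_image:
  "{x \<in> beta_set c P. v \<le> x} = beta c P ` {i. 1 \<le> i \<and> v \<le> beta c P i}"
  unfolding beta_set_def by auto

lemma finite_beta_set_ge:
  assumes "is_partition P"
  shows "finite {x \<in> beta_set c P. v \<le> x}"
  unfolding beta_set_ge_eq_image using finite_rows_beta_ge[OF assms] by simp

lemma count_ge_beta_set:
  assumes "is_partition P"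
  shows "count_ge (beta_set c P) v = card {i. 1 \<le> i \<and> v \<le> beta c P i}"
  unfolding count_ge_def beta_set_ge_eq_image
  by (rule card_image, rule inj_on_subset[OF inj_on_beta[OF assms]]) auto

lemma le_beta_iff_le_count_ge:
  assumes "is_partition P" "1 \<le> i"
  shows "v \<le> beta c P i \<longleftrightarrow> i \<le> count_ge (beta_set c P) v"
proof
  assume le: "v \<le> beta c P i"
  have "{1..i} \<subseteq> {k. 1 \<le> k \<and> v \<le> beta c P k}"
  proof
    fix k assume "k \<in> {1..i}"
    then have "beta c P i \<le> beta c P k"
      using beta_strict_decreasing[OF assms(1), of k i c] by (cases "k = i") auto
    then show "k \<in> {k. 1 \<le> k \<and> v \<le> beta c P k}" using le \<open>k \<in> {1..i}\<close> by auto
  qed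
  from card_mono[OF finite_rows_beta_ge[OF assms(1)] this]
  show "i \<le> count_ge (beta_set c P) v" using count_ge_beta_set[OF assms(1)] by simp
next
  assume le: "i \<le> count_ge (beta_set c P) v"
  show "v \<le> beta c P i"
  proof (rule ccontr)
    assume not_le: "\<not> v \<le> beta c P i"
    have "{k. 1 \<le> k \<and> v \<le> beta c P k} \<subseteq> {1..i - 1}"
    proof
      fix k assume k: "k \<in> {k. 1 \<le> k \<and> v \<le> beta c P k}"
      have "k < i"
      proof (rule ccontr)
        assume "\<not> k < i"
        then have "beta c P k \<le> beta c P i"
          using beta_strict_decreasing[OF assms, of k c] by (cases "k = i") auto
        then show False using k not_le by auto
      qed
      then show "k \<in> {1..i - 1}" using k by auto
    qed
    from card_mono[OF _ this] have "count_ge (beta_set c P) v \<le> i - 1"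
      using count_ge_beta_set[OF assms(1)] by simp
    then show False using le assms(2) by linarith
  qed
qed

lemma young_eq_count_ge:
  assumes "is_partition P"
  shows "young P = {(i, j). 1 \<le> i \<and> 1 \<le> j \<and> i \<le> count_ge (beta_set c P) (int j - int i + c + 1)}"
proof -
  have "j \<le> P i \<longleftrightarrow> i \<le> count_ge (beta_set c P) (int j - int i + c + 1)" if "1 \<le> i" for i j
    using le_beta_iff_le_count_ge[OF assms that, of "int j - int i + c + 1" c]
    unfolding beta_def by simp
  then show ?thesis unfolding young_def by auto
qed

lemma beta_count_ge:
  assumes "is_partition P" "w \<in> beta_set c P"
  shows "1 \<le> count_ge (beta_set c P) w" "beta c P (count_ge (beta_set c P) w) = w"
proof -
  obtain i where i: "1 \<le> i" "w = beta c P i" using assms(2) unfolding beta_set_def by auto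
  have "i \<le> count_ge (beta_set c P) w"
    using le_beta_iff_le_count_ge[OF assms(1) i(1), of w c] i by simp
  moreover have "\<not> Suc i \<le> count_ge (beta_set c P) w"
    using le_beta_iff_le_count_ge[OF assms(1), of "Suc i" w c]
      beta_strict_decreasing[OF assms(1) i(1), of "Suc i" c] i by auto
  ultimately have "count_ge (beta_set c P) w = i" by simp
  then show "1 \<le> count_ge (beta_set c P) w" "beta c P (count_ge (beta_set c P) w) = w"
    using i by simp_all
qed

lemma count_ge_antimono:
  assumes "finite {x \<in> X. v \<le> x}" "v \<le> w"
  shows "count_ge X w \<le> count_ge X v"
  unfolding count_ge_def using assms by (intro card_mono) auto

lemma count_ge_Un_disjoint:
  assumes "finite {x \<in> X \<union> Y. v \<le> x}" "X \<inter> Y = {}"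
  shows "count_ge (X \<union> Y) v = count_ge X v + count_ge Y v"
proof -
  have "{x \<in> X \<union> Y. v \<le> x} = {x \<in> X. v \<le> x} \<union> {x \<in> Y. v \<le> x}" by auto
  moreover have "finite {x \<in> X. v \<le> x}" "finite {x \<in> Y. v \<le> x}"
    using assms(1) by (auto intro: finite_subset[OF _ assms(1)])
  ultimately show ?thesis
    unfolding count_ge_def using assms(2) by (simp add: card_Un_disjoint disjoint_iff)
qed

lemma card_filter_two:
  assumes "a \<noteq> b"
  shows "card {k \<in> {a, b}. Pr k} = (if Pr a then 1 else 0) + (if Pr b then 1 else 0)"
proof -
  have "{k \<in> {a, b}. Pr k} =
      (if Pr a \<and> Pr b then {a, b} else if Pr a then {a} else if Pr b then {b} else {})"
    by auto
  then show ?thesis using assms by simp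
qed

lemma count_ge_two:
  assumes "a \<noteq> b"
  shows "count_ge {a, b} v = (if v \<le> a then 1 else 0) + (if v \<le> b then 1 else 0)"
  unfolding count_ge_def using card_filter_two[OF assms] .

lemma young_subset_if_count_ge_le:
  assumes "is_partition P" "is_partition Q" "\<And>v. count_ge (beta_set c P) v \<le> count_ge (beta_set c Q) v"
  shows "young P \<subseteq> young Q"
  using young_eq_count_ge[OF assms(1), of c] young_eq_count_ge[OF assms(2), of c] assms(3)
  by (auto intro: order_trans)

lemma partition_eq_if_count_ge_le:
  assumes "is_partition P" "is_partition Q" "psize P = psize Q"
    and "\<And>v. count_ge (beta_set c P) v \<le> count_ge (beta_set c Q) v"
  shows "P = Q"
proof -
  have "young P \<subseteq> young Q" using young_subset_if_count_ge_le[OF assms(1,2,4)] .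
  then have "young P = young Q"
    using finite_young[OF assms(2)] assms(3) unfolding psize_def by (simp add: card_subset_eq)
  then show ?thesis using partition_eqI_young[OF assms(1,2)] by simp
qed

lemma count_ge_beta_set_far_left:
  assumes "is_partition P"
  obtains V where "\<And>v. v \<le> V \<Longrightarrow> count_ge (beta_set c P) v = nat (c + 1 - v)"
proof -
  obtain R where R: "\<And>i. R < i \<Longrightarrow> P i = 0" using partition_eventually_zero[OF assms] by blast
  have "count_ge (beta_set c P) v = nat (c + 1 - v)" if "v \<le> c - int R - 1" for v
  proof -
    define K where "K = nat (c + 1 - v)"
    have K: "int K = c + 1 - v" "R < K" "1 \<le> K" using that unfolding K_def by auto
    have "beta c P K = v" using R[OF K(2)] K(1) unfolding beta_def by simp
    then have "K \<le> count_ge (beta_set c P) v" using le_beta_iff_le_count_ge[OF assms K(3), of v c] by simp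
    moreover have "\<not> Suc K \<le> count_ge (beta_set c P) v"
      using le_beta_iff_le_count_ge[OF assms, of "Suc K" v c] R[of "Suc K"] K unfolding beta_def by auto
    ultimately show ?thesis unfolding K_def by simp
  qed
  then show ?thesis using that by blast
qed

section \<open>Ribbons swept out by bead moves\<close>

lemma rhead_eqI:
  assumes "u \<in> S" "\<And>w. w \<in> S \<Longrightarrow> w \<noteq> u \<Longrightarrow> cont0 u < cont0 w"
  shows "rhead S = u"
  unfolding rhead_def
proof (rule some_equality)
  show "u \<in> S \<and> (\<forall>w\<in>S. cont0 u \<le> cont0 w)" using assms by force
next
  fix w assume w: "w \<in> S \<and> (\<forall>w'\<in>S. cont0 w \<le> cont0 w')"
  show "w = u"
  proof (rule ccontr)
    assume "w \<noteq> u"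
    then have "cont0 u < cont0 w" using assms(2) w by blast
    moreover have "cont0 w \<le> cont0 u" using w assms(1) by blast
    ultimately show False by simp
  qed
qed

lemma rtail_eqI:
  assumes "u \<in> S" "\<And>w. w \<in> S \<Longrightarrow> w \<noteq> u \<Longrightarrow> cont0 w < cont0 u"
  shows "rtail S = u"
  unfolding rtail_def
proof (rule some_equality)
  show "u \<in> S \<and> (\<forall>w\<in>S. cont0 w \<le> cont0 u)" using assms by force
next
  fix w assume w: "w \<in> S \<and> (\<forall>w'\<in>S. cont0 w' \<le> cont0 w)"
  show "w = u"
  proof (rule ccontr)
    assume "w \<noteq> u"
    then have "cont0 w < cont0 u" using assms(2) w by blast
    moreover have "cont0 u \<le> cont0 w" using w assms(1) by blast
    ultimately show False by simp
  qed
qed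

text \<open>When P has one more bead than Q at positions \<ge> v, this is the unique node of
  young P - young Q of content v - c - 1.\<close>
definition diagonal_node :: "int \<Rightarrow> (nat \<Rightarrow> nat) \<Rightarrow> int \<Rightarrow> nat \<times> nat" where
  "diagonal_node c P v =
     (count_ge (beta_set c P) v, nat (v - c - 1 + int (count_ge (beta_set c P) v)))"

lemma diagonal_node_in_young_diff:
  assumes P: "is_partition P" and Q: "is_partition Q"
    and step: "count_ge (beta_set c P) v = count_ge (beta_set c Q) v + 1"
  shows "diagonal_node c P v \<in> young P - young Q" "cont0 (diagonal_node c P v) = v - c - 1"
proof -
  define i where "i = count_ge (beta_set c P) v"
  have i: "1 \<le> i" "\<not> i \<le> count_ge (beta_set c Q) v" using step unfolding i_def by simp_all
  then have "\<not> v \<le> beta c Q i" using le_beta_iff_le_count_ge[OF Q i(1), of v c] by simp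
  then have j: "1 \<le> v - c - 1 + int i" unfolding beta_def by simp
  have node: "diagonal_node c P v = (i, nat (v - c - 1 + int i))"
    unfolding diagonal_node_def i_def by simp
  show "diagonal_node c P v \<in> young P - young Q"
    unfolding node young_eq_count_ge[OF P, of c] young_eq_count_ge[OF Q, of c]
    using i j unfolding i_def by auto
  show "cont0 (diagonal_node c P v) = v - c - 1"
    unfolding node cont0_def using j by simp
qed

context
  fixes c lo hi :: int and P Q :: "nat \<Rightarrow> nat"
  assumes P: "is_partition P" and Q: "is_partition Q" and lo_hi: "lo < hi"
    and count_step: "\<And>v. lo < v \<Longrightarrow> v \<le> hi \<Longrightarrow>
      count_ge (beta_set c P) v = count_ge (beta_set c Q) v + 1"
    and count_le: "\<And>v. \<not> (lo < v \<and> v \<le> hi) \<Longrightarrow>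
      count_ge (beta_set c P) v \<le> count_ge (beta_set c Q) v"
begin

lemma young_diff_eq_diagonal:
  "young P - young Q = diagonal_node c P ` {lo<..hi}"
proof
  show "young P - young Q \<subseteq> diagonal_node c P ` {lo<..hi}"
  proof
    fix u assume u: "u \<in> young P - young Q"
    obtain i j where ij: "u = (i, j)" by (cases u)
    define v where "v = int j - int i + c + 1"
    have i: "1 \<le> i" "1 \<le> j" "i \<le> count_ge (beta_set c P) v" "\<not> i \<le> count_ge (beta_set c Q) v"
      using u young_eq_count_ge[OF P, of c] young_eq_count_ge[OF Q, of c] unfolding ij v_def by auto
    then have v: "lo < v" "v \<le> hi" using count_le[of v] by (meson le_trans not_le)+
    then have "i = count_ge (beta_set c P) v" using i(3,4) count_step[of v] by simp
    then have "u = diagonal_node c P v" unfolding ij diagonal_node_def v_def by auto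
    then show "u \<in> diagonal_node c P ` {lo<..hi}" using v by auto
  qed
  show "diagonal_node c P ` {lo<..hi} \<subseteq> young P - young Q"
    using diagonal_node_in_young_diff(1)[OF P Q count_step] by auto
qed

lemma cont0_diagonal_node:
  "v \<in> {lo<..hi} \<Longrightarrow> cont0 (diagonal_node c P v) = v - c - 1"
  using diagonal_node_in_young_diff(2)[OF P Q count_step] by simp

lemma card_young_diff_step: "card (young P - young Q) = nat (hi - lo)"
proof -
  have "inj_on (diagonal_node c P) {lo<..hi}"
  proof (rule inj_onI)
    fix v w assume "v \<in> {lo<..hi}" "w \<in> {lo<..hi}" "diagonal_node c P v = diagonal_node c P w"
    then have "v - c - 1 = w - c - 1" using cont0_diagonal_node by metis
    then show "v = w" by simp
  qed
  then show ?thesis unfolding young_diff_eq_diagonal by (simp add: card_image)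
qed

lemma rhead_young_diff_step:
  "rhead (young P - young Q) = diagonal_node c P (lo + 1)"
  "cont0 (rhead (young P - young Q)) = lo - c"
proof -
  show head: "rhead (young P - young Q) = diagonal_node c P (lo + 1)"
    unfolding young_diff_eq_diagonal
  proof (rule rhead_eqI)
    fix u assume "u \<in> diagonal_node c P ` {lo<..hi}" "u \<noteq> diagonal_node c P (lo + 1)"
    then obtain v where "v \<in> {lo<..hi}" "v \<noteq> lo + 1" "u = diagonal_node c P v" by blast
    then show "cont0 (diagonal_node c P (lo + 1)) < cont0 u"
      using lo_hi by (simp add: cont0_diagonal_node)
  qed (use lo_hi in simp)
  show "cont0 (rhead (young P - young Q)) = lo - c"
    unfolding head using lo_hi by (simp add: cont0_diagonal_node)
qed

lemma rtail_young_diff_step: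
  "rtail (young P - young Q) = diagonal_node c P hi"
  unfolding young_diff_eq_diagonal
proof (rule rtail_eqI)
  fix u assume "u \<in> diagonal_node c P ` {lo<..hi}" "u \<noteq> diagonal_node c P hi"
  then obtain v where "v \<in> {lo<..hi}" "v \<noteq> hi" "u = diagonal_node c P v" by blast
  then show "cont0 u < cont0 (diagonal_node c P hi)"
    using lo_hi by (simp add: cont0_diagonal_node)
qed (use lo_hi in simp)

end

section \<open>The abacus\<close>

lemma lex_less_iff:
  fixes x x' b m m' :: int
  assumes "0 \<le> x" "x < b" "0 \<le> x'" "x' < b"
  shows "x + b * m < x' + b * m' \<longleftrightarrow> m < m' \<or> (m = m' \<and> x < x')"
proof (cases m m' rule: linorder_cases)
  case less
  then have "b * (m + 1) \<le> b * m'" using assms by (intro mult_left_mono) auto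
  then show ?thesis using less assms by (simp add: algebra_simps)
next
  case greater
  then have "b * (m' + 1) \<le> b * m" using assms by (intro mult_left_mono) auto
  then show ?thesis using greater assms by (simp add: algebra_simps)
qed simp

lemma lex_eq_iff:
  fixes x x' b m m' :: int
  assumes "0 \<le> x" "x < b" "0 \<le> x'" "x' < b"
  shows "x + b * m = x' + b * m' \<longleftrightarrow> m = m' \<and> x = x'"
proof
  assume "x + b * m = x' + b * m'"
  then have "\<not> x + b * m < x' + b * m'" "\<not> x' + b * m' < x + b * m" by simp_all
  then show "m = m' \<and> x = x'"
    unfolding lex_less_iff[OF assms] lex_less_iff[OF assms(3,4,1,2)] by auto
qed simp

lemma dvd_diff_iff_eq_if_bounded:
  fixes X Y N :: int
  assumes "0 \<le> X" "X < N" "0 \<le> Y" "Y < N"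
  shows "N dvd X - Y \<longleftrightarrow> X = Y"
  using assms by (simp flip: mod_eq_dvd_iff)

context
  fixes n l :: nat
  assumes n: "n \<ge> 1" and l: "l \<ge> 1"
begin

lemma cc_bounds: "1 \<le> cc n l k" "cc n l k \<le> int n"
proof -
  have "0 < int n" using n by simp
  from pos_mod_sign[OF this] pos_mod_bound[OF this]
  show "1 \<le> cc n l k" "cc n l k \<le> int n" unfolding cc_def by (simp_all add: add1_zle_eq)
qed

lemma dd_bounds: "1 \<le> dd n l k" "dd n l k \<le> l"
proof -
  define t where "t = (k - 1) mod int (n * l)"
  have t: "0 \<le> t" "t < int n * int l" using n l unfolding t_def by auto
  have mod_nonneg: "0 \<le> t mod int n" using n by simp
  have "0 \<le> t div int n" using t(1) n by (simp add: pos_imp_zdiv_nonneg_iff)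
  moreover have "t mod int n + int n * (t div int n) < 0 + int n * int l" using t(2) by simp
  then have "t div int n < int l"
    using lex_less_iff[of "t mod int n" "int n" 0 "t div int n" "int l"] n mod_nonneg by auto
  ultimately show "1 \<le> dd n l k" "dd n l k \<le> l"
    unfolding dd_def t_def[symmetric] by auto
qed

lemma abacus_decomposition:
  "k = cc n l k + int n * (int (dd n l k) - 1) + int (n * l) * mm n l k"
proof -
  define t where "t = (k - 1) mod int (n * l)"
  have "0 \<le> t div int n" using n l unfolding t_def by (simp add: pos_imp_zdiv_nonneg_iff)
  then have "int n * (int (dd n l k) - 1) = int n * (t div int n)"
    unfolding dd_def t_def[symmetric] by simp
  moreover have "t = t mod int n + int n * (t div int n)" by simp
  moreover have "cc n l k = t mod int n + 1" unfolding cc_def t_def by simp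
  moreover have "k - 1 = t + int (n * l) * mm n l k" unfolding t_def mm_def by simp
  ultimately show ?thesis by linarith
qed

lemma abacus_dvd_iff:
  "int (n * l) dvd (cc n l u - cc n l w) + int n * (int (dd n l e) - int (dd n l e'))
     \<longleftrightarrow> cc n l u = cc n l w \<and> dd n l e = dd n l e'"
proof -
  define X where "X = (cc n l u - 1) + int n * (int (dd n l e) - 1)"
  define Y where "Y = (cc n l w - 1) + int n * (int (dd n l e') - 1)"
  have bounds: "0 \<le> X" "X < int (n * l)" if "X = (cc n l u - 1) + int n * (int (dd n l e) - 1)" for X u e
  proof -
    have "0 \<le> int n * (int (dd n l e) - 1)" using dd_bounds[of e] by simp
    moreover have "int n * (int (dd n l e) - 1) \<le> int n * (int l - 1)"
      using dd_bounds[of e] by (intro mult_left_mono) auto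
    moreover have "int n * (int l - 1) = int (n * l) - int n" by (simp add: algebra_simps)
    ultimately show "0 \<le> X" "X < int (n * l)"
      using that cc_bounds[of u] by linarith+
  qed
  have "(cc n l u - cc n l w) + int n * (int (dd n l e) - int (dd n l e')) = X - Y"
    unfolding X_def Y_def by (simp add: algebra_simps)
  then have "int (n * l) dvd (cc n l u - cc n l w) + int n * (int (dd n l e) - int (dd n l e'))
      \<longleftrightarrow> X = Y"
    using dvd_diff_iff_eq_if_bounded bounds[OF X_def] bounds[OF Y_def] by simp
  also have "\<dots> \<longleftrightarrow> int (dd n l e) - 1 = int (dd n l e') - 1 \<and> cc n l u - 1 = cc n l w - 1"
    unfolding X_def Y_def by (rule lex_eq_iff) (use cc_bounds[of u] cc_bounds[of w] in auto)
  also have "\<dots> \<longleftrightarrow> cc n l u = cc n l w \<and> dd n l e = dd n l e'"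
    by auto
  finally show ?thesis .
qed

lemma diff_mod_eq_iff:
  assumes "X = (cc n l k - cc n l k') + int n * (int (dd n l k) - int (dd n l k'))
              - ((cc n l u - cc n l w) + int n * (int (dd n l e) - int (dd n l e')))"
  shows "(k - k') mod int (n * l) = X mod int (n * l) \<longleftrightarrow> cc n l u = cc n l w \<and> dd n l e = dd n l e'"
proof -
  have "k - k' - X = (cc n l u - cc n l w) + int n * (int (dd n l e) - int (dd n l e'))
      + int (n * l) * (mm n l k - mm n l k')"
    by (subst (1 2) abacus_decomposition) (simp add: assms algebra_simps)
  then have "int (n * l) dvd k - k' - X \<longleftrightarrow>
      int (n * l) dvd (cc n l u - cc n l w) + int n * (int (dd n l e) - int (dd n l e'))"
    by (simp add: dvd_add_left_iff)
  then show ?thesis using abacus_dvd_iff[of u w e e'] by (simp add: mod_eq_dvd_iff)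
qed

lemma phi_less_iff:
  assumes "dd n l k = dd n l k'"
  shows "phi n l k < phi n l k' \<longleftrightarrow> k < k'"
proof -
  define e where "e = int (dd n l k) - 1"
  have digits: "0 \<le> cc n l j - 1" "cc n l j - 1 < int n" "cc n l j - 1 < int (n * l)" for j
  proof -
    have "int n \<le> int (n * l)" using l by (cases l) auto
    then show "0 \<le> cc n l j - 1" "cc n l j - 1 < int n" "cc n l j - 1 < int (n * l)"
      using cc_bounds[of j] by linarith+
  qed
  have "phi n l k < phi n l k' \<longleftrightarrow>
      (cc n l k - 1) + int n * mm n l k < (cc n l k' - 1) + int n * mm n l k'"
    unfolding phi_def by simp
  also have "\<dots> \<longleftrightarrow>
      (cc n l k - 1) + int (n * l) * mm n l k < (cc n l k' - 1) + int (n * l) * mm n l k'"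
    using lex_less_iff[OF digits(1,2,1,2)] lex_less_iff[OF digits(1,3,1,3)] by simp
  also have "\<dots> \<longleftrightarrow> k < k'"
    using abacus_decomposition[of k] abacus_decomposition[of k'] assms by (simp only:) linarith
  finally show ?thesis .
qed

lemma phi_eq_iff:
  assumes "dd n l k = dd n l k'"
  shows "phi n l k = phi n l k' \<longleftrightarrow> k = k'"
  using phi_less_iff[OF assms] phi_less_iff[OF assms[symmetric]]
  by (cases k k' rule: linorder_cases) auto

lemma phi_mod_eq_iff: "phi n l k mod int n = phi n l k' mod int n \<longleftrightarrow> cc n l k = cc n l k'"
proof -
  have "phi n l k mod int n = phi n l k' mod int n \<longleftrightarrow> cc n l k mod int n = cc n l k' mod int n"
    unfolding phi_def by simp
  also have "\<dots> \<longleftrightarrow> int n dvd (cc n l k - 1) - (cc n l k' - 1)"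
    by (simp add: mod_eq_dvd_iff)
  also have "\<dots> \<longleftrightarrow> cc n l k - 1 = cc n l k' - 1"
    by (rule dvd_diff_iff_eq_if_bounded) (use cc_bounds[of k] cc_bounds[of k'] in auto)
  also have "\<dots> \<longleftrightarrow> cc n l k = cc n l k'" by simp
  finally show ?thesis .
qed

lemma beta_set_runner:
  assumes "corresp n l s L p" "e \<in> {1..l}"
  shows "beta_set (s e) (L e) = phi n l ` {k \<in> beta_set (charge l s) p. dd n l k = e}"
proof -
  have "x \<in> beta_set (s e) (L e) \<longleftrightarrow>
      (x, e) \<in> {(beta (s b) (L b) i, b) | b i. b \<in> {1..l} \<and> 1 \<le> i}" for x
    using assms(2) unfolding beta_set_def by auto
  also have "\<dots> x \<longleftrightarrow> (x, e) \<in> (\<lambda>k. (phi n l k, dd n l k)) ` beta_set (charge l s) p" for x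
    using assms(1) unfolding corresp_def beta_set_def by simp
  finally show ?thesis by auto
qed

lemma phi_mem_beta_set_runner_iff:
  assumes "corresp n l s L p" "e \<in> {1..l}" "dd n l k = e"
  shows "phi n l k \<in> beta_set (s e) (L e) \<longleftrightarrow> k \<in> beta_set (charge l s) p"
  unfolding beta_set_runner[OF assms(1,2)] using assms(3) phi_eq_iff by auto

lemma corresp_unique:
  assumes "is_partition p" "is_partition p'" "corresp n l s L p" "corresp n l s L p'"
  shows "p = p'"
proof -
  have "inj (\<lambda>k. (phi n l k, dd n l k))" by (rule injI) (use phi_eq_iff in blast)
  moreover have "(\<lambda>k. (phi n l k, dd n l k)) ` beta_set (charge l s) p =
      (\<lambda>k. (phi n l k, dd n l k)) ` beta_set (charge l s) p'"
    using assms(3,4) unfolding corresp_def beta_set_def by simp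
  ultimately have "beta_set (charge l s) p = beta_set (charge l s) p'" by (simp add: inj_image_eq_iff)
  then have "young p = young p'"
    using young_eq_count_ge[OF assms(1), of "charge l s"] young_eq_count_ge[OF assms(2), of "charge l s"]
    by simp
  then show ?thesis using partition_eqI_young assms(1,2) by blast
qed

lemma inj_on_phi_runner: "inj_on (phi n l) {k. dd n l k = e}"
  by (rule inj_onI) (simp add: phi_eq_iff)

lemma count_ge_runner:
  assumes "corresp n l s L p" "e \<in> {1..l}" "is_partition (L e)"
  shows "count_ge (beta_set (s e) (L e)) v =
      card {k \<in> beta_set (charge l s) p. dd n l k = e \<and> v \<le> phi n l k}"
    and "finite {k \<in> beta_set (charge l s) p. dd n l k = e \<and> v \<le> phi n l k}"
proof -
  have ge: "{x \<in> beta_set (s e) (L e). v \<le> x} =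
      phi n l ` {k \<in> beta_set (charge l s) p. dd n l k = e \<and> v \<le> phi n l k}"
    unfolding beta_set_runner[OF assms(1,2)] by auto
  have inj: "inj_on (phi n l) {k \<in> beta_set (charge l s) p. dd n l k = e \<and> v \<le> phi n l k}"
    by (rule inj_on_subset[OF inj_on_phi_runner[of e]]) auto
  show "count_ge (beta_set (s e) (L e)) v =
      card {k \<in> beta_set (charge l s) p. dd n l k = e \<and> v \<le> phi n l k}"
    unfolding count_ge_def ge using inj by (simp add: card_image)
  show "finite {k \<in> beta_set (charge l s) p. dd n l k = e \<and> v \<le> phi n l k}"
    using finite_beta_set_ge[OF assms(3), of "s e" v] inj unfolding ge by (simp add: finite_image_iff)
qed

lemma count_ge_runner_split:
  assumes "corresp n l s L p" "e \<in> {1..l}" "is_partition (L e)"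
    and "beta_set (charge l s) p = C \<union> A" "C \<inter> A = {}"
  shows "count_ge (beta_set (s e) (L e)) v =
    card {k \<in> C. dd n l k = e \<and> v \<le> phi n l k} + card {k \<in> A. dd n l k = e \<and> v \<le> phi n l k}"
proof -
  let ?S = "\<lambda>X. {k \<in> X. dd n l k = e \<and> v \<le> phi n l k}"
  have "?S (beta_set (charge l s) p) = ?S C \<union> ?S A" "?S C \<inter> ?S A = {}"
    using assms(4,5) by auto
  moreover have "?S C \<subseteq> ?S (beta_set (charge l s) p)" "?S A \<subseteq> ?S (beta_set (charge l s) p)"
    using assms(4) by auto
  then have "finite (?S C)" "finite (?S A)"
    using count_ge_runner(2)[OF assms(1-3), of v] by (auto intro: finite_subset)
  ultimately show ?thesis using count_ge_runner(1)[OF assms(1-3), of v] by (simp add: card_Un_disjoint)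
qed

end

section \<open>Two-bead exchanges\<close>

lemma beta_set_eq_Bset_Un:
  assumes "is_partition P" "psize P \<le> r"
  shows "beta_set c P = Bset c r P \<union> {c + 1 - int i | i. r < i}"
    and "Bset c r P \<inter> {c + 1 - int i | i. r < i} = {}"
proof -
  have tail: "beta c P i = c + 1 - int i" if "r < i" for i
    using partition_zero_beyond_size[OF assms(1)] that assms(2) unfolding beta_def by simp
  show "beta_set c P = Bset c r P \<union> {c + 1 - int i | i. r < i}"
  proof (intro equalityI subsetI)
    fix x assume "x \<in> beta_set c P"
    then obtain i where "1 \<le> i" "x = beta c P i" unfolding beta_set_def by auto
    then show "x \<in> Bset c r P \<union> {c + 1 - int i | i. r < i}"
      using tail[of i] unfolding Bset_def by (cases "r < i") auto
  next
    fix x assume "x \<in> Bset c r P \<union> {c + 1 - int i | i. r < i}"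
    then obtain i where "1 \<le> i" "x = beta c P i"
    proof
      assume "x \<in> Bset c r P"
      then show ?thesis using that unfolding Bset_def by blast
    next
      assume "x \<in> {c + 1 - int i | i. r < i}"
      then obtain i where "r < i" "x = c + 1 - int i" by blast
      then show ?thesis using that[of i] tail[of i] by simp
    qed
    then show "x \<in> beta_set c P" unfolding beta_set_def by auto
  qed
  show "Bset c r P \<inter> {c + 1 - int i | i. r < i} = {}"
    unfolding Bset_def using beta_strict_decreasing[OF assms(1)] tail
    by (auto simp flip: tail) (metis le_less_trans less_irrefl)
qed

lemma beta_set_diff_eq_Bset_diff:
  assumes "is_partition P" "is_partition Q" "psize P \<le> r" "psize Q \<le> r"
  shows "beta_set c P - beta_set c Q = Bset c r P - Bset c r Q"
  using beta_set_eq_Bset_Un[OF assms(1,3), of c] beta_set_eq_Bset_Un[OF assms(2,4), of c] by blast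

lemma Bset_eq_image: "Bset c r P = beta c P ` {1..r}"
  unfolding Bset_def by auto

lemma card_Bset:
  assumes "is_partition P"
  shows "card (Bset c r P) = r"
proof -
  have "inj_on (beta c P) {1..r}" by (rule inj_on_subset[OF inj_on_beta[OF assms]]) auto
  then show ?thesis unfolding Bset_eq_image by (simp add: card_image)
qed

lemma card_beta_set_diff:
  assumes "is_partition P" "is_partition Q" "psize P = r" "psize Q = r"
    and "int (card (Bset c r P \<inter> Bset c r Q)) = int r - 2"
  shows "card (beta_set c P - beta_set c Q) = 2"
proof -
  have "card (beta_set c P - beta_set c Q) = card (Bset c r P - Bset c r Q)"
    using beta_set_diff_eq_Bset_diff[OF assms(1,2), of r c] assms(3,4) by simp
  also have "\<dots> = card (Bset c r P) - card (Bset c r P \<inter> Bset c r Q)"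
    by (rule card_Diff_subset_Int) (simp add: Bset_eq_image)
  finally
  show ?thesis using card_Bset[OF assms(1)] assms(5) by simp
qed

lemma count_ge_beta_set_exchange:
  assumes "is_partition P" "beta_set c P - D = {a, a'}" "a \<noteq> a'"
  shows "count_ge (beta_set c P) v =
    count_ge (beta_set c P \<inter> D) v + (if v \<le> a then 1 else 0) + (if v \<le> a' then 1 else 0)"
proof -
  have "beta_set c P = (beta_set c P \<inter> D) \<union> {a, a'}" "(beta_set c P \<inter> D) \<inter> {a, a'} = {}"
    using assms(2) by blast+
  then show ?thesis
    using count_ge_Un_disjoint[of "beta_set c P \<inter> D" "{a, a'}" v] finite_beta_set_ge[OF assms(1), of c v]
      count_ge_two[OF assms(3)] by simp
qed

lemma partial_sum_less_if_count_ge_less: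
  assumes P: "is_partition P" and Q: "is_partition Q"
    and less: "count_ge (beta_set c Q) w < count_ge (beta_set c P) w"
    and above: "\<And>v. w < v \<Longrightarrow> count_ge (beta_set c Q) v \<le> count_ge (beta_set c P) v"
  shows "\<exists>k. (\<Sum>i=1..k. Q i) < (\<Sum>i=1..k. P i)"
proof
  define k where "k = count_ge (beta_set c P) w"
  have k: "1 \<le> k" "\<not> k \<le> count_ge (beta_set c Q) w" using less unfolding k_def by simp_all
  have "w \<le> beta c P k" "\<not> w \<le> beta c Q k"
    using le_beta_iff_le_count_ge[OF P k(1), of w c] le_beta_iff_le_count_ge[OF Q k(1), of w c] k
    unfolding k_def by simp_all
  then have "Q k < P k" unfolding beta_def by simp
  moreover have "Q i \<le> P i" if "i \<in> {1..k}" for i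
  proof (cases "Q i = 0")
    case False
    define v where "v = int (Q i) - int i + c + 1"
    have "(i, Q i) \<in> young Q" using False that unfolding young_def by auto
    then have iQ: "i \<le> count_ge (beta_set c Q) v"
      using young_eq_count_ge[OF Q, of c] unfolding v_def by auto
    have "i \<le> count_ge (beta_set c P) v"
    proof (cases "v \<le> w")
      case True
      then have "k \<le> count_ge (beta_set c P) v"
        unfolding k_def by (rule count_ge_antimono[OF finite_beta_set_ge[OF P]])
      then show ?thesis using that by simp
    next
      case False
      then show ?thesis using iQ above[of v] by simp
    qed
    then have "(i, Q i) \<in> young P"
      using young_eq_count_ge[OF P, of c] that False unfolding v_def by auto
    then show ?thesis unfolding young_def by auto
  qed simp
  ultimately show "(\<Sum>i=1..k. Q i) < (\<Sum>i=1..k. P i)"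
    using k(1) by (intro sum_strict_mono_ex1) auto
qed

locale beta_exchange =
  fixes c :: int and p q :: "nat \<Rightarrow> nat" and a1 a2 b1 b2 :: int
  assumes partition_p: "is_partition p" and partition_q: "is_partition q"
    and dominated: "dominates_strict p q"
    and diff_pq: "beta_set c p - beta_set c q = {a1, a2}" and a_less: "a1 < a2"
    and diff_qp: "beta_set c q - beta_set c p = {b1, b2}" and b_less: "b1 < b2"
begin

abbreviation common :: "int set" where
  "common \<equiv> beta_set c p \<inter> beta_set c q"

lemma count_ge_p: "count_ge (beta_set c p) v =
    count_ge common v + (if v \<le> a1 then 1 else 0) + (if v \<le> a2 then 1 else 0)"
  using count_ge_beta_set_exchange[OF partition_p diff_pq] a_less by simp

lemma count_ge_q: "count_ge (beta_set c q) v =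
    count_ge common v + (if v \<le> b1 then 1 else 0) + (if v \<le> b2 then 1 else 0)"
  using count_ge_beta_set_exchange[OF partition_q diff_qp] b_less by (simp add: Int_commute)

lemma interlaced: "b1 < a1" "a1 < a2" "a2 < b2"
proof -
  have distinct: "a1 \<noteq> b1" "a1 \<noteq> b2" "a2 \<noteq> b1" "a2 \<noteq> b2" using diff_pq diff_qp by blast+
  show "a2 < b2"
  proof (rule ccontr)
    assume "\<not> a2 < b2"
    then have "b2 < a2" using distinct by simp
    then have "\<exists>k. (\<Sum>i=1..k. q i) < (\<Sum>i=1..k. p i)"
      using a_less b_less
      by (intro partial_sum_less_if_count_ge_less[OF partition_p partition_q, of c a2])
        (auto simp: count_ge_p count_ge_q)
    then show False using dominated unfolding dominates_strict_def by (meson not_le)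
  qed
  show "b1 < a1"
  proof (rule ccontr)
    assume "\<not> b1 < a1"
    then have "a1 < b1" using distinct by simp
    then have "count_ge (beta_set c p) v \<le> count_ge (beta_set c q) v" for v
      using \<open>a2 < b2\<close> by (simp add: count_ge_p count_ge_q)
    then have "p = q"
      using partition_eq_if_count_ge_le[OF partition_p partition_q] dominated
      unfolding dominates_strict_def by blast
    then show False using dominated unfolding dominates_strict_def by simp
  qed
qed (rule a_less)

lemma card_young_diff_pq: "card (young p - young q) = nat (a1 - b1)"
  by (rule card_young_diff_step[OF partition_p partition_q, of b1 a1 c])
    (use interlaced in \<open>auto simp: count_ge_p count_ge_q\<close>)

lemma card_young_diff_qp: "card (young q - young p) = nat (b2 - a2)"
  by (rule card_young_diff_step[OF partition_q partition_p, of a2 b2 c])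
    (use interlaced in \<open>auto simp: count_ge_p count_ge_q\<close>)

lemma exchange_lengths_eq: "a1 - b1 = b2 - a2"
proof -
  have "card (young p - young q) = card (young q - young p)"
    using dominated finite_young[OF partition_p] finite_young[OF partition_q]
    unfolding dominates_strict_def psize_def by (simp add: card_Diff_subset_Int Int_commute)
  then show ?thesis using card_young_diff_pq card_young_diff_qp interlaced by simp
qed

lemma beta_row_rhead: "beta c q (fst (rhead (young p - young q))) = b1"
proof -
  have "rhead (young p - young q) = diagonal_node c p (b1 + 1)"
    by (rule rhead_young_diff_step(1)[OF partition_p partition_q, of b1 a1 c])
      (use interlaced in \<open>auto simp: count_ge_p count_ge_q\<close>)
  moreover have "count_ge common (b1 + 1) = count_ge common b1"
  proof -
    have "{x \<in> common. b1 + 1 \<le> x} = {x \<in> common. b1 \<le> x}" using diff_qp by force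
    then show ?thesis unfolding count_ge_def by simp
  qed
  ultimately have "fst (rhead (young p - young q)) = count_ge (beta_set c q) b1"
    unfolding diagonal_node_def using interlaced by (simp add: count_ge_p count_ge_q)
  moreover have "b1 \<in> beta_set c q" using diff_qp by blast
  ultimately show ?thesis using beta_count_ge(2)[OF partition_q] by simp
qed

lemma beta_row_rtail: "beta c q (fst (rtail (young q - young p))) = b2"
proof -
  have "rtail (young q - young p) = diagonal_node c q b2"
    by (rule rtail_young_diff_step[OF partition_q partition_p, of a2 b2 c])
      (use interlaced in \<open>auto simp: count_ge_p count_ge_q\<close>)
  moreover have "b2 \<in> beta_set c q" using diff_qp by blast
  ultimately show ?thesis unfolding diagonal_node_def using beta_count_ge(2)[OF partition_q] by simp
qed

end

section \<open>The coefficient j for a two-bead exchange\<close>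

lemma rhead_cont0_single_exchange:
  assumes P: "is_partition P" and Q: "is_partition Q"
    and count_P: "\<And>v. count_ge (beta_set c P) v = Z v + (if v \<le> \<alpha> then 1 else 0)"
    and count_Q: "\<And>v. count_ge (beta_set c Q) v = Z v + (if v \<le> \<beta> then 1 else 0)"
    and nonempty: "young P - young Q \<noteq> {}"
  shows "cont0 (rhead (young P - young Q)) = \<beta> - c"
proof -
  have "\<beta> < \<alpha>"
  proof (rule ccontr)
    assume "\<not> \<beta> < \<alpha>"
    then have "young P \<subseteq> young Q"
      by (intro young_subset_if_count_ge_le[OF P Q, where c = c]) (simp add: count_P count_Q)
    then show False using nonempty by simp
  qed
  then show ?thesis
    by (intro rhead_young_diff_step(2)[OF P Q]) (auto simp: count_P count_Q)
qed

lemma resn_eq_cont0: "resn n s b u = (s b + cont0 u) mod int n"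
  unfolding resn_def cont0_def by (simp add: algebra_simps)

lemma ribbon_nonempty: "ribbon S \<Longrightarrow> S \<noteq> {}"
  unfolding ribbon_def by simp

lemma J1_D:
  assumes "J1 l L M d d'"
  shows "d \<in> {1..l}" "d' \<in> {1..l}" "d \<noteq> d'"
    "young (M d) \<subseteq> young (L d)" "young (L d') \<subseteq> young (M d')"
    "young (L d) - young (M d) \<noteq> {}" "young (M d') - young (L d') \<noteq> {}"
    "\<And>b. b \<in> {1..l} \<Longrightarrow> b \<noteq> d \<Longrightarrow> b \<noteq> d' \<Longrightarrow> L b = M b"
  using assms unfolding J1_def by (auto dest: ribbon_nonempty)

lemma J2_D:
  assumes "J2 l L M d"
  shows "d \<in> {1..l}" "young (L d) - young (M d) \<noteq> {}" "young (M d) - young (L d) \<noteq> {}"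
    "\<And>b. b \<in> {1..l} \<Longrightarrow> b \<noteq> d \<Longrightarrow> L b = M b"
  using assms unfolding J2_def by (auto dest: ribbon_nonempty)

lemma J1_unique:
  assumes "J1 l L M d d'" "J1 l L M e e'"
  shows "e = d \<and> e' = d'"
proof -
  note A = J1_D[OF assms(1)] and B = J1_D[OF assms(2)]
  have "L e \<noteq> M e" "L e' \<noteq> M e'" using B(6,7) by auto
  then have "e \<in> {d, d'}" "e' \<in> {d, d'}" using A(8)[of e] A(8)[of e'] B(1,2) by auto
  moreover have "e \<noteq> d'"
  proof
    assume "e = d'"
    then have "young (M d') = young (L d')" using A(5) B(4) by simp
    then show False using A(7) by simp
  qed
  ultimately show ?thesis using B(3) by auto
qed

lemma J2_unique:
  assumes "J2 l L M d" "J2 l L M e"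
  shows "e = d"
proof (rule ccontr)
  assume "e \<noteq> d"
  then have "L e = M e" using J2_D(4)[OF assms(1)] J2_D(1)[OF assms(2)] by simp
  then show False using J2_D(2)[OF assms(2)] by simp
qed

lemma not_J1_if_J2:
  assumes "J2 l L M e"
  shows "\<not> J1 l L M d d'"
proof
  assume J: "J1 l L M d d'"
  have "L d \<noteq> M d" "L d' \<noteq> M d'" using J1_D(6,7)[OF J] by auto
  then have "d = e" "d' = e" using J2_D(4)[OF assms] J1_D(1,2)[OF J] by auto
  then show False using J1_D(3)[OF J] by simp
qed

lemma jcoef_eq_j1val:
  assumes "J1 l L M d d'"
  shows "jcoef n l s L M = j1val n s L M d d'"
proof -
  have "(SOME dp. J1 l L M (fst dp) (snd dp)) = (d, d')"
  proof (rule some_equality)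
    fix dp assume "J1 l L M (fst dp) (snd dp)"
    then show "dp = (d, d')" using J1_unique[OF assms] by (simp add: prod_eq_iff)
  qed (use assms in simp)
  then show ?thesis using assms unfolding jcoef_def by (auto simp: Let_def)
qed

lemma jcoef_eq_j2val:
  assumes "J2 l L M d"
  shows "jcoef n l s L M = j2val n s L M d"
proof -
  have "(SOME d. J2 l L M d) = d"
    by (rule some_equality) (use assms J2_unique[OF assms] in blast)+
  moreover have "\<not> (\<exists>d d'. J1 l L M d d')" using not_J1_if_J2[OF assms] by blast
  moreover have "\<exists>d. J2 l L M d" using assms by blast
  ultimately show ?thesis unfolding jcoef_def by (simp only: if_True if_False)
qed

locale abacus_exchange = beta_exchange "charge l s" p q a1 a2 b1 b2
  for n l :: nat and s :: "nat \<Rightarrow> int" and p q :: "nat \<Rightarrow> nat" and a1 a2 b1 b2 :: int +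
  fixes L M :: "nat \<Rightarrow> nat \<Rightarrow> nat"
  assumes n_pos: "n \<ge> 1" and l_pos: "l \<ge> 1"
    and partition_L: "\<And>b. b \<in> {1..l} \<Longrightarrow> is_partition (L b)"
    and partition_M: "\<And>b. b \<in> {1..l} \<Longrightarrow> is_partition (M b)"
    and corresp_L: "corresp n l s L p" and corresp_M: "corresp n l s M q"
begin

abbreviation common_beads :: "nat \<Rightarrow> int \<Rightarrow> nat" where
  "common_beads e v \<equiv> card {k \<in> common. dd n l k = e \<and> v \<le> phi n l k}"

lemma count_ge_runner_L:
  "e \<in> {1..l} \<Longrightarrow> count_ge (beta_set (s e) (L e)) v =
    common_beads e v + card {k \<in> {a1, a2}. dd n l k = e \<and> v \<le> phi n l k}"
  by (rule count_ge_runner_split[OF n_pos l_pos corresp_L _ partition_L]) (use diff_pq in blast)+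

lemma count_ge_runner_M:
  "e \<in> {1..l} \<Longrightarrow> count_ge (beta_set (s e) (M e)) v =
    common_beads e v + card {k \<in> {b1, b2}. dd n l k = e \<and> v \<le> phi n l k}"
  by (rule count_ge_runner_split[OF n_pos l_pos corresp_M _ partition_M]) (use diff_qp in blast)+

lemma runner_balance:
  assumes e: "e \<in> {1..l}"
  shows "card {k \<in> {a1, a2}. dd n l k = e} = card {k \<in> {b1, b2}. dd n l k = e}"
proof -
  obtain V1 where V1: "\<And>v. v \<le> V1 \<Longrightarrow> count_ge (beta_set (s e) (L e)) v = nat (s e + 1 - v)"
    using count_ge_beta_set_far_left[OF partition_L[OF e]] by blast
  obtain V2 where V2: "\<And>v. v \<le> V2 \<Longrightarrow> count_ge (beta_set (s e) (M e)) v = nat (s e + 1 - v)"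
    using count_ge_beta_set_far_left[OF partition_M[OF e]] by blast
  \<comment> \<open>Far to the left both beta-sets are full, so they have equally many beads there.\<close>
  define v where "v = Min {V1, V2, phi n l a1, phi n l a2, phi n l b1, phi n l b2}"
  have "v \<le> V1" "v \<le> V2" and below: "\<And>k. k \<in> {a1, a2, b1, b2} \<Longrightarrow> v \<le> phi n l k"
    unfolding v_def by auto
  have "{k \<in> {a1, a2}. dd n l k = e \<and> v \<le> phi n l k} = {k \<in> {a1, a2}. dd n l k = e}"
    "{k \<in> {b1, b2}. dd n l k = e \<and> v \<le> phi n l k} = {k \<in> {b1, b2}. dd n l k = e}"
    using below by auto
  then show ?thesis
    using count_ge_runner_L[OF e, of v] count_ge_runner_M[OF e, of v] V1[OF \<open>v \<le> V1\<close>] V2[OF \<open>v \<le> V2\<close>]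
    by simp
qed

lemma runner_changed_iff:
  assumes e: "e \<in> {1..l}"
  shows "L e \<noteq> M e \<longleftrightarrow> (\<exists>k \<in> {a1, a2, b1, b2}. dd n l k = e)"
proof
  assume "\<exists>k \<in> {a1, a2, b1, b2}. dd n l k = e"
  then obtain k where k: "k \<in> {a1, a2, b1, b2}" "dd n l k = e" by blast
  have "k \<in> beta_set (charge l s) p \<longleftrightarrow> k \<notin> beta_set (charge l s) q"
    using k(1) diff_pq diff_qp by blast
  then have "phi n l k \<in> beta_set (s e) (L e) \<longleftrightarrow> phi n l k \<notin> beta_set (s e) (M e)"
    using phi_mem_beta_set_runner_iff[OF n_pos l_pos corresp_L e k(2)]
      phi_mem_beta_set_runner_iff[OF n_pos l_pos corresp_M e k(2)] by simp
  then show "L e \<noteq> M e" by auto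
next
  assume "L e \<noteq> M e"
  show "\<exists>k \<in> {a1, a2, b1, b2}. dd n l k = e"
  proof (rule ccontr)
    assume "\<not> (\<exists>k \<in> {a1, a2, b1, b2}. dd n l k = e)"
    then have no_beads: "{k \<in> {a1, a2}. dd n l k = e \<and> v \<le> phi n l k} = {}"
      "{k \<in> {b1, b2}. dd n l k = e \<and> v \<le> phi n l k} = {}" for v
      by auto
    have "count_ge (beta_set (s e) (L e)) v = count_ge (beta_set (s e) (M e)) v" for v
      unfolding count_ge_runner_L[OF e, of v] count_ge_runner_M[OF e, of v] no_beads by simp
    then have "young (L e) = young (M e)"
      using young_eq_count_ge[OF partition_L[OF e], of "s e"] young_eq_count_ge[OF partition_M[OF e], of "s e"]
      by simp
    then show False using partition_eqI_young[OF partition_L[OF e] partition_M[OF e]] \<open>L e \<noteq> M e\<close> by simp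
  qed
qed

lemma dd_mem_if_others_unchanged:
  assumes "k \<in> {a1, a2, b1, b2}" and unchanged: "\<And>e. e \<in> {1..l} \<Longrightarrow> e \<notin> D \<Longrightarrow> L e = M e"
  shows "dd n l k \<in> D"
proof (rule ccontr)
  assume "dd n l k \<notin> D"
  moreover have "dd n l k \<in> {1..l}" using dd_bounds[OF n_pos l_pos] by simp
  ultimately show False using runner_changed_iff unchanged assms(1) by blast
qed

lemma J1_runners:
  assumes J: "J1 l L M d d'"
  obtains a a' b b' where "{a, a'} = {a1, a2}" "{b, b'} = {b1, b2}"
    "dd n l a = d" "dd n l b = d" "dd n l a' = d'" "dd n l b' = d'"
proof -
  have on_d: "dd n l k \<in> {d, d'}" if "k \<in> {a1, a2, b1, b2}" for k
    using dd_mem_if_others_unchanged[OF that, of "{d, d'}"] J1_D(8)[OF J] by blast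
  have "L d \<noteq> M d" "L d' \<noteq> M d'" using J1_D(6,7)[OF J] by auto
  then have changed: "\<exists>k \<in> {a1, a2, b1, b2}. dd n l k = d" "\<exists>k \<in> {a1, a2, b1, b2}. dd n l k = d'"
    using runner_changed_iff[OF J1_D(1)[OF J]] runner_changed_iff[OF J1_D(2)[OF J]] by blast+
  have "a1 \<noteq> a2" "b1 \<noteq> b2" using interlaced by simp_all
  from runner_balance[OF J1_D(1)[OF J]]
  have balance: "(if dd n l a1 = d then 1 else 0) + (if dd n l a2 = d then 1 else 0) =
      (if dd n l b1 = d then 1 else 0) + (if dd n l b2 = d then (1::nat) else 0)"
    unfolding card_filter_two[OF \<open>a1 \<noteq> a2\<close>] card_filter_two[OF \<open>b1 \<noteq> b2\<close>] .
  have "(dd n l a1 = d \<and> dd n l a2 = d') \<or> (dd n l a1 = d' \<and> dd n l a2 = d)"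
    "(dd n l b1 = d \<and> dd n l b2 = d') \<or> (dd n l b1 = d' \<and> dd n l b2 = d)"
    using on_d changed balance J1_D(3)[OF J] by (auto split: if_splits)
  then consider
      "dd n l a1 = d" "dd n l a2 = d'" "dd n l b1 = d" "dd n l b2 = d'"
    | "dd n l a1 = d" "dd n l a2 = d'" "dd n l b2 = d" "dd n l b1 = d'"
    | "dd n l a2 = d" "dd n l a1 = d'" "dd n l b1 = d" "dd n l b2 = d'"
    | "dd n l a2 = d" "dd n l a1 = d'" "dd n l b2 = d" "dd n l b1 = d'"
    by blast
  then show ?thesis
  proof cases
    case 1 then show ?thesis by (intro that[of a1 a2 b1 b2]) simp_all
  next
    case 2 then show ?thesis by (intro that[of a1 a2 b2 b1]) (simp_all add: insert_commute)
  next
    case 3 then show ?thesis by (intro that[of a2 a1 b1 b2]) (simp_all add: insert_commute)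
  next
    case 4 then show ?thesis by (intro that[of a2 a1 b2 b1]) (simp_all add: insert_commute)
  qed
qed

lemma count_ge_runner_single:
  assumes e: "e \<in> {1..l}"
    and "{k \<in> {a1, a2}. dd n l k = e} = {a}" "{k \<in> {b1, b2}. dd n l k = e} = {b}"
  shows "count_ge (beta_set (s e) (L e)) v = common_beads e v + (if v \<le> phi n l a then 1 else 0)"
    "count_ge (beta_set (s e) (M e)) v = common_beads e v + (if v \<le> phi n l b then 1 else 0)"
proof -
  have single: "card {k \<in> X. dd n l k = e \<and> v \<le> phi n l k} = (if v \<le> phi n l x then 1 else 0)"
    if "{k \<in> X. dd n l k = e} = {x}" for X x
  proof -
    have "{k \<in> X. dd n l k = e \<and> v \<le> phi n l k} = (if v \<le> phi n l x then {x} else {})"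
      using that by auto
    then show ?thesis by simp
  qed
  show "count_ge (beta_set (s e) (L e)) v = common_beads e v + (if v \<le> phi n l a then 1 else 0)"
    using count_ge_runner_L[OF e] single[OF assms(2)] by simp
  show "count_ge (beta_set (s e) (M e)) v = common_beads e v + (if v \<le> phi n l b then 1 else 0)"
    using count_ge_runner_M[OF e] single[OF assms(3)] by simp
qed

lemma count_ge_runner_double:
  assumes e: "e \<in> {1..l}" and on_e: "\<And>k. k \<in> {a1, a2, b1, b2} \<Longrightarrow> dd n l k = e"
  shows "count_ge (beta_set (s e) (L e)) v = common_beads e v +
      (if v \<le> phi n l a1 then 1 else 0) + (if v \<le> phi n l a2 then 1 else 0)"
    "count_ge (beta_set (s e) (M e)) v = common_beads e v +
      (if v \<le> phi n l b1 then 1 else 0) + (if v \<le> phi n l b2 then 1 else 0)"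
proof -
  have "{k \<in> {a1, a2}. dd n l k = e \<and> v \<le> phi n l k} = {k \<in> {a1, a2}. v \<le> phi n l k}"
    "{k \<in> {b1, b2}. dd n l k = e \<and> v \<le> phi n l k} = {k \<in> {b1, b2}. v \<le> phi n l k}"
    using on_e by auto
  then show "count_ge (beta_set (s e) (L e)) v = common_beads e v +
      (if v \<le> phi n l a1 then 1 else 0) + (if v \<le> phi n l a2 then 1 else 0)"
    "count_ge (beta_set (s e) (M e)) v = common_beads e v +
      (if v \<le> phi n l b1 then 1 else 0) + (if v \<le> phi n l b2 then 1 else 0)"
    using count_ge_runner_L[OF e, of v] count_ge_runner_M[OF e, of v]
      card_filter_two[of a1 a2] card_filter_two[of b1 b2] interlaced by simp_all
qed

lemma exchange_mod_gamma:
  "(a1 - b1) mod int (n * l) = (cc n l b2 - cc n l b1) mod int (n * l) \<longleftrightarrow>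
     cc n l b1 = cc n l a2 \<and> dd n l b2 = dd n l a2"
  "(a1 - b1) mod int (n * l) = (cc n l b2 - cc n l b1) mod int (n * l) \<longleftrightarrow>
     cc n l a1 = cc n l b2 \<and> dd n l a1 = dd n l b1"
  using diff_mod_eq_iff[OF n_pos l_pos, of "cc n l b2 - cc n l b1" b2 a2 b1 a2 b2 a2]
    diff_mod_eq_iff[OF n_pos l_pos, of "cc n l b2 - cc n l b1" a1 b1 a1 b2 a1 b1]
  by (simp_all add: exchange_lengths_eq)

lemma exchange_mod_delta:
  "(a1 - b1) mod int (n * l) = int n * (int (dd n l b2) - int (dd n l b1)) mod int (n * l) \<longleftrightarrow>
     cc n l a1 = cc n l b1 \<and> dd n l a1 = dd n l b2"
  "(a1 - b1) mod int (n * l) = int n * (int (dd n l b2) - int (dd n l b1)) mod int (n * l) \<longleftrightarrow>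
     cc n l b2 = cc n l a2 \<and> dd n l b1 = dd n l a2"
  using diff_mod_eq_iff[OF n_pos l_pos, of "int n * (int (dd n l b2) - int (dd n l b1))" a1 b1 a1 b1 a1 b2]
    diff_mod_eq_iff[OF n_pos l_pos, of "int n * (int (dd n l b2) - int (dd n l b1))" b2 a2 b2 a2 b1 a2]
  by (simp_all add: exchange_lengths_eq algebra_simps)

lemma exchange_mod_zero:
  "(a1 - b1) mod int (n * l) = 0 \<longleftrightarrow> cc n l a1 = cc n l b1 \<and> dd n l a1 = dd n l b1"
  using diff_mod_eq_iff[OF n_pos l_pos, of 0 a1 b1 a1 b1 a1 b1] by simp

lemma delta_eq_zero_iff:
  "int n * (int (dd n l b2) - int (dd n l b1)) mod int (n * l) = 0 \<longleftrightarrow> dd n l b2 = dd n l b1"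
  using abacus_dvd_iff[OF n_pos l_pos, of b2 b2 b2 b1] by (simp add: dvd_eq_mod_eq_0)

lemma J1_exchange_congruence:
  assumes "{a, a'} = {a1, a2}" "{b, b'} = {b1, b2}"
    and "dd n l a = dd n l b" "dd n l a' = dd n l b'" "dd n l a \<noteq> dd n l a'"
  shows "((a1 - b1) mod int (n * l) = (cc n l b2 - cc n l b1) mod int (n * l) \<or>
      (a1 - b1) mod int (n * l) = int n * (int (dd n l b2) - int (dd n l b1)) mod int (n * l))
    \<longleftrightarrow> cc n l b = cc n l a'"
proof -
  have "(a = a1 \<and> a' = a2) \<or> (a = a2 \<and> a' = a1)" "(b = b1 \<and> b' = b2) \<or> (b = b2 \<and> b' = b1)"
    using assms(1,2) by (simp_all add: doubleton_eq_iff)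
  then consider "a = a1" "a' = a2" "b = b1" "b' = b2" | "a = a1" "a' = a2" "b = b2" "b' = b1"
    | "a = a2" "a' = a1" "b = b1" "b' = b2" | "a = a2" "a' = a1" "b = b2" "b' = b1"
    by blast
  then show ?thesis
  proof cases
    case 1 then show ?thesis
      using assms(3-5) by (simp only: exchange_mod_gamma(1) exchange_mod_delta(1)) auto
  next
    case 2 then show ?thesis
      using assms(3-5) by (simp only: exchange_mod_gamma(1) exchange_mod_delta(2)) auto
  next
    case 3 then show ?thesis
      using assms(3-5) by (simp only: exchange_mod_gamma(2) exchange_mod_delta(1)) auto
  next
    case 4 then show ?thesis
      using assms(3-5) by (simp only: exchange_mod_gamma(2) exchange_mod_delta(1)) auto
  qed
qed

lemma jcoef_if_J1:
  assumes J: "J1 l L M d d'"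
  shows "0 < int n * (int (dd n l b2) - int (dd n l b1)) mod int (n * l) \<and>
    jcoef n l s L M =
      (if (a1 - b1) mod int (n * l) = (cc n l b2 - cc n l b1) mod int (n * l) \<or>
          (a1 - b1) mod int (n * l) = int n * (int (dd n l b2) - int (dd n l b1)) mod int (n * l)
       then (-1) ^ (rht (young (L d) - young (M d)) + rht (young (M d') - young (L d')))
       else 0)"
proof -
  obtain a a' b b' where runners: "{a, a'} = {a1, a2}" "{b, b'} = {b1, b2}"
    "dd n l a = d" "dd n l b = d" "dd n l a' = d'" "dd n l b' = d'"
    using J1_runners[OF J] by blast
  have "d \<noteq> d'" using J1_D(3)[OF J] .
  have "{k \<in> {a1, a2}. dd n l k = d} = {a}" "{k \<in> {b1, b2}. dd n l k = d} = {b}"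
    "{k \<in> {a1, a2}. dd n l k = d'} = {a'}" "{k \<in> {b1, b2}. dd n l k = d'} = {b'}"
    unfolding runners(1,2)[symmetric] using runners(3-6) \<open>d \<noteq> d'\<close> by auto
  note count_d = count_ge_runner_single[OF J1_D(1)[OF J] this(1,2)]
    and count_d' = count_ge_runner_single[OF J1_D(2)[OF J] this(3,4)]
  have "cont0 (rhead (young (L d) - young (M d))) = phi n l b - s d"
    by (rule rhead_cont0_single_exchange[OF partition_L partition_M count_d J1_D(6)[OF J]])
      (use J1_D(1)[OF J] in simp_all)
  moreover have "cont0 (rhead (young (M d') - young (L d'))) = phi n l a' - s d'"
    by (rule rhead_cont0_single_exchange[OF partition_M partition_L count_d'(2,1) J1_D(7)[OF J]])
      (use J1_D(2)[OF J] in simp_all)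
  ultimately have residues: "resn n s d (rhead (young (L d) - young (M d))) =
      resn n s d' (rhead (young (M d') - young (L d'))) \<longleftrightarrow> cc n l b = cc n l a'"
    unfolding resn_eq_cont0 using phi_mod_eq_iff[OF n_pos l_pos] by simp
  have "dd n l b1 \<noteq> dd n l b2"
    using runners(2,4,6) \<open>d \<noteq> d'\<close> by (auto simp: doubleton_eq_iff)
  then have "0 < int n * (int (dd n l b2) - int (dd n l b1)) mod int (n * l)"
    using delta_eq_zero_iff n_pos l_pos by (simp add: order_le_neq_trans)
  moreover have "jcoef n l s L M =
      (if cc n l b = cc n l a'
       then (-1) ^ (rht (young (L d) - young (M d)) + rht (young (M d') - young (L d'))) else 0)"
    using jcoef_eq_j1val[OF J] residues unfolding j1val_def Let_def by simp
  ultimately show ?thesis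
    using J1_exchange_congruence[OF runners(1,2)] runners(3-6) \<open>d \<noteq> d'\<close> by simp
qed

lemma jcoef_if_J2:
  assumes J: "J2 l L M d"
  shows "int n * (int (dd n l b2) - int (dd n l b1)) mod int (n * l) = 0 \<and>
    jcoef n l s L M =
      (-1) ^ (rht (young (L d) - young (M d)) + rht (young (M d) - young (L d))) *
      (if (a1 - b1) mod int (n * l) = (cc n l b2 - cc n l b1) mod int (n * l) \<and>
          (a1 - b1) mod int (n * l) \<noteq> 0 then 1
       else if (a1 - b1) mod int (n * l) \<noteq> (cc n l b2 - cc n l b1) mod int (n * l) \<and>
          (a1 - b1) mod int (n * l) = 0 then -1
       else 0)"
proof -
  note d = J2_D(1)[OF J]
  have on_d: "dd n l k = d" if "k \<in> {a1, a2, b1, b2}" for k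
    using dd_mem_if_others_unchanged[OF that, of "{d}"] J2_D(4)[OF J] by blast
  then have phi_order: "phi n l b1 < phi n l a1" "phi n l a1 < phi n l a2" "phi n l a2 < phi n l b2"
    using phi_less_iff[OF n_pos l_pos] interlaced by simp_all
  have counts: "count_ge (beta_set (s d) (L d)) v = common_beads d v +
      (if v \<le> phi n l a1 then 1 else 0) + (if v \<le> phi n l a2 then 1 else 0)"
    "count_ge (beta_set (s d) (M d)) v = common_beads d v +
      (if v \<le> phi n l b1 then 1 else 0) + (if v \<le> phi n l b2 then 1 else 0)" for v
    using count_ge_runner_double[OF d on_d] by simp_all
  have card: "card (young (L d) - young (M d)) = nat (phi n l a1 - phi n l b1)"
    by (rule card_young_diff_step[OF partition_L[OF d] partition_M[OF d], where c = "s d"])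
      (use phi_order in \<open>auto simp: counts\<close>)
  have head: "cont0 (rhead (young (L d) - young (M d))) = phi n l b1 - s d"
    by (rule rhead_young_diff_step(2)[OF partition_L[OF d] partition_M[OF d], of "phi n l b1" "phi n l a1"])
      (use phi_order in \<open>auto simp: counts\<close>)
  have head': "cont0 (rhead (young (M d) - young (L d))) = phi n l a2 - s d"
    by (rule rhead_young_diff_step(2)[OF partition_M[OF d] partition_L[OF d], of "phi n l a2" "phi n l b2"])
      (use phi_order in \<open>auto simp: counts\<close>)
  have same: "resn n s d (rhead (young (L d) - young (M d))) =
      resn n s d (rhead (young (M d) - young (L d))) \<longleftrightarrow> cc n l b1 = cc n l a2"
    unfolding resn_eq_cont0 head head' using phi_mod_eq_iff[OF n_pos l_pos] by simp
  have "n dvd card (young (L d) - young (M d)) \<longleftrightarrow> int n dvd phi n l a1 - phi n l b1"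
    unfolding card using phi_order by (simp flip: int_dvd_int_iff)
  also have "\<dots> \<longleftrightarrow> cc n l a1 = cc n l b1"
    using phi_mod_eq_iff[OF n_pos l_pos] by (simp add: mod_eq_dvd_iff)
  finally have dvd: "n dvd card (young (L d) - young (M d)) \<longleftrightarrow> cc n l a1 = cc n l b1" .
  show ?thesis
    using jcoef_eq_j2val[OF J] same dvd on_d delta_eq_zero_iff exchange_mod_gamma(1) exchange_mod_zero
    unfolding j2val_def Let_def by simp
qed

end

lemma card_2_obtain_less:
  fixes X :: "'a :: linorder set"
  assumes "card X = 2"
  obtains a b where "X = {a, b}" "a < b"
proof -
  obtain a b where "X = {a, b}" "a \<noteq> b" using assms by (auto simp: card_2_iff)
  then show ?thesis using that[of a b] that[of b a] by (cases a b rule: linorder_cases) (auto simp: insert_commute)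
qed

lemma condH_abacus_exchange:
  assumes nl: "n \<ge> 1" "l \<ge> 1" and "multipartition l m L" "multipartition l m M"
    and H: "condH n l s L M p q r"
  obtains a1 a2 b1 b2 where "abacus_exchange n l s p q a1 a2 b1 b2 L M"
proof -
  let ?c = "charge l s"
  have P: "is_partition p" and Q: "is_partition q" and corresp: "corresp n l s L p" "corresp n l s M q"
    and size: "psize p = r" "psize q = r"
    and common: "int (card (Bset ?c r p \<inter> Bset ?c r q)) = int r - 2"
    using H unfolding condH_def by auto
  obtain p' q' where "is_partition p'" "is_partition q'" "corresp n l s L p'" "corresp n l s M q'"
    "dominates_strict p' q'"
    using H unfolding condH_def prec_def by blast
  then have dom: "dominates_strict p q" using corresp_unique[OF nl] P Q corresp by metis
  obtain a1 a2 where A: "beta_set ?c p - beta_set ?c q = {a1, a2}" "a1 < a2"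
    using card_beta_set_diff[OF P Q size common] card_2_obtain_less by metis
  obtain b1 b2 where B: "beta_set ?c q - beta_set ?c p = {b1, b2}" "b1 < b2"
    using card_beta_set_diff[OF Q P size(2,1)] common card_2_obtain_less by (metis Int_commute)
  have "abacus_exchange n l s p q a1 a2 b1 b2 L M"
    using P Q dom A B corresp nl assms(3,4) unfolding multipartition_def
    by unfold_locales auto
  then show ?thesis by (rule that)
qed

theorem mainTheorem9:
  fixes n l m r :: nat and s :: "nat \<Rightarrow> int"
    and L M :: "nat \<Rightarrow> nat \<Rightarrow> nat" and p q :: "nat \<Rightarrow> nat"
  assumes "n \<ge> 1" and "l \<ge> 1" and "m \<ge> 1"
    and "multipartition l m L" and "multipartition l m M"
    and H: "condH n l s L M p q r"
  defines "h \<equiv> card (young p - young q)"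
    and "x \<equiv> fst (rhead (young p - young q))"
    and "y \<equiv> fst (rtail (young q - young p))"
  defines "\<gamma> \<equiv> (cc n l (beta (charge l s) q y) - cc n l (beta (charge l s) q x)) mod int (n * l)"
    and "\<delta> \<equiv> (int n * (int (dd n l (beta (charge l s) q y)) - int (dd n l (beta (charge l s) q x))))
              mod int (n * l)"
  shows
    "(\<forall>d d'. J1 l L M d d' \<longrightarrow>
        \<delta> > 0 \<and>
        jprec n l s L M =
          (if int h mod int (n * l) = \<gamma> \<or> int h mod int (n * l) = \<delta>
           then (-1) ^ (rht (young (L d) - young (M d)) + rht (young (M d') - young (L d')))
           else 0))
     \<and>
     (\<forall>d. J2 l L M d \<longrightarrow>
        \<delta> = 0 \<and>
        jprec n l s L M =
          (-1) ^ (rht (young (L d) - young (M d)) + rht (young (M d) - young (L d))) *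
          (if int h mod int (n * l) = \<gamma> \<and> int h mod int (n * l) \<noteq> 0 then 1
           else if int h mod int (n * l) \<noteq> \<gamma> \<and> int h mod int (n * l) = 0 then -1
           else 0))"
proof -
  obtain a1 a2 b1 b2 where "abacus_exchange n l s p q a1 a2 b1 b2 L M"
    using condH_abacus_exchange[OF assms(1,2,4,5) H] .
  then interpret abacus_exchange n l s p q a1 a2 b1 b2 L M .
  have "int h = a1 - b1" unfolding h_def card_young_diff_pq using interlaced by simp
  moreover have "\<gamma> = (cc n l b2 - cc n l b1) mod int (n * l)"
    and "\<delta> = int n * (int (dd n l b2) - int (dd n l b1)) mod int (n * l)"
    unfolding \<gamma>_def \<delta>_def x_def y_def beta_row_rhead beta_row_rtail by simp_all
  moreover have "jprec n l s L M = jcoef n l s L M" using H unfolding condH_def jprec_def by simp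
  ultimately show ?thesis using jcoef_if_J1 jcoef_if_J2 by simp
qed

end
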